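(* For $k=2$, every initial store $IS\in\{\Box,\blacksquare\}^2$ and all $i,j\in\{1,2\}$, there is no correct compositional translation from $\mathrm{SYNCSIMPLE}$ into $\mathrm{LOCKSIMPLE}_{2,IS}$ of blocking type $(P_iP_i,P_jP_j)$.
   Context: $\mathrm{SYNCSIMPLE}$: subprocesses $\mathcal{U} ::= \checkmark \mid 0 \mid\, !\mathcal{U} \mid\, ?\mathcal{U}$; processes are finite parallel compositions $\mathcal{U}_1\mid\cdots\mid\mathcal{U}_n$ ($\mid$ associative, commutative, $0$ a unit). Reduction: $!\mathcal{U}_1\mid ?\mathcal{U}_2\mid \mathcal{P}\to \mathcal{U}_1\mid\mathcal{U}_2\mid\mathcal{P}$. Successful: of form $\checkmark\mid\mathcal{P}$; may-convergent: reduces to a successful process; must-convergent: every reachable process is may-convergent. $\mathrm{LOCKSIMPLE}_{k,IS}$ ($IS\in\{\Box,\blacksquare\}^k$, $\Box$ empty, $\blacksquare$ full): subprocesses are words over $\{P_1,T_1,\dots,P_k,T_k\}$ followed by $0$ or $\checkmark$; states $(\mathcal{P},C)$ reduce by $(P_i\mathcal{U}\mid\mathcal{P},C)\to(\mathcal{U}\mid\mathcal{P},C[C_i:=\blacksquare])$ only if $C_i=\Box$, and $(T_i\mathcal{U}\mid\mathcal{P},C)\to(\mathcal{U}\mid\mathcal{P},C[C_i:=\Box])$ always. Success = process contains $\checkmark$; a process $\mathcal{P}$ is may/must-convergent iff the state $(\mathcal{P},IS)$ is. A compositional translation $\tau$ is given by words $\tau(!),\tau(?)$ with $\tau(0)=0$,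 $\tau(\checkmark)=\checkmark$, $\tau(!\mathcal{U})=\tau(!)\tau(\mathcal{U})$, $\tau(?\mathcal{U})=\tau(?)\tau(\mathcal{U})$, $\tau$ commuting with $\mid$; correct = preserves and reflects may- and must-convergence. Blocking type: for a word $S$, run $S$ as a single subprocess from $IS$; if it gets stuck at an occurrence of $P_i$, that occurrence ends the blocking prefix; if it is the first symbol from $\{P_i,T_i\}$ in $S$ (prefix $RP_i$, $R$ without $P_i,T_i$) the blocking type is $P_i$, otherwise the prefix has form $R_1P_iR_2P_i$, $R_2$ without $P_i,T_i$, and the blocking type is $P_iP_i$. $\tau$ has blocking type $(W_1,W_2)$ if $\tau(!)$ has type $W_1$ and $\tau(?)$ type $W_2$. *)

theory Defs
  imports "HOL-Library.Multiset"
begin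

datatype ssub = SCheck | SZero | SSend ssub | SRecv ssub

type_synonym sproc = "ssub multiset"

inductive sync_step :: "sproc \<Rightarrow> sproc \<Rightarrow> bool" where
  "sync_step ({#SSend u1, SRecv u2#} + P) ({#u1, u2#} + P)"

definition sync_successful :: "sproc \<Rightarrow> bool" where
  "sync_successful P \<longleftrightarrow> SCheck \<in># P"

definition may_conv :: "('a \<Rightarrow> 'a \<Rightarrow> bool) \<Rightarrow> ('a \<Rightarrow> bool) \<Rightarrow> 'a \<Rightarrow> bool" where
  "may_conv step succ x \<longleftrightarrow> (\<exists>y. step\<^sup>*\<^sup>* x y \<and> succ y)"

definition must_conv :: "('a \<Rightarrow> 'a \<Rightarrow> bool) \<Rightarrow> ('a \<Rightarrow> bool) \<Rightarrow> 'a \<Rightarrow> bool" where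
  "must_conv step succ x \<longleftrightarrow> (\<forall>y. step\<^sup>*\<^sup>* x y \<longrightarrow> may_conv step succ y)"

text \<open>Symbols P_i and T_i, indices 1..k. A store is a list of booleans of length k;
  entry i-1 is True iff lock i is full.\<close>

datatype lsym = P nat | T nat

fun sym_idx :: "lsym \<Rightarrow> nat" where
  "sym_idx (P i) = i" | "sym_idx (T i) = i"

definition wf_word :: "nat \<Rightarrow> lsym list \<Rightarrow> bool" where
  "wf_word k w \<longleftrightarrow> (\<forall>s \<in> set w. 1 \<le> sym_idx s \<and> sym_idx s \<le> k)"

datatype lend = LZero | LCheck

type_synonym lsub = "lsym list \<times> lend"
type_synonym lproc = "lsub multiset"
type_synonym lstate = "lproc \<times> bool list"

inductive lock_step :: "lstate \<Rightarrow> lstate \<Rightarrow> bool" where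
  lockP: "\<lbrakk>1 \<le> i; i \<le> length C; \<not> C ! (i - 1)\<rbrakk> \<Longrightarrow>
     lock_step ({#(P i # w, e)#} + Q, C) ({#(w, e)#} + Q, C[i - 1 := True])"
| lockT: "\<lbrakk>1 \<le> i; i \<le> length C\<rbrakk> \<Longrightarrow>
     lock_step ({#(T i # w, e)#} + Q, C) ({#(w, e)#} + Q, C[i - 1 := False])"

text \<open>Success: the process has a check at top level (i.e. of the form check | Q).\<close>
definition lock_successful :: "lstate \<Rightarrow> bool" where
  "lock_successful S \<longleftrightarrow> ([], LCheck) \<in># fst S"

fun tr_sub :: "lsym list \<Rightarrow> lsym list \<Rightarrow> ssub \<Rightarrow> lsub" where
  "tr_sub ws wr SCheck = ([], LCheck)"
| "tr_sub ws wr SZero = ([], LZero)"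
| "tr_sub ws wr (SSend u) = (ws @ fst (tr_sub ws wr u), snd (tr_sub ws wr u))"
| "tr_sub ws wr (SRecv u) = (wr @ fst (tr_sub ws wr u), snd (tr_sub ws wr u))"

definition tr_proc :: "lsym list \<Rightarrow> lsym list \<Rightarrow> sproc \<Rightarrow> lproc" where
  "tr_proc ws wr M = image_mset (tr_sub ws wr) M"

definition correct_translation :: "bool list \<Rightarrow> lsym list \<Rightarrow> lsym list \<Rightarrow> bool" where
  "correct_translation IS ws wr \<longleftrightarrow>
     (\<forall>M. (may_conv sync_step sync_successful M \<longleftrightarrow>
            may_conv lock_step lock_successful (tr_proc ws wr M, IS))
        \<and> (must_conv sync_step sync_successful M \<longleftrightarrow>
            must_conv lock_step lock_successful (tr_proc ws wr M, IS)))"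

fun stuck_pos :: "bool list \<Rightarrow> lsym list \<Rightarrow> nat option" where
  "stuck_pos C [] = None"
| "stuck_pos C (P i # w) =
     (if C ! (i - 1) then Some 0 else map_option Suc (stuck_pos (C[i - 1 := True]) w))"
| "stuck_pos C (T i # w) = map_option Suc (stuck_pos (C[i - 1 := False]) w)"

datatype btype = BP nat | BPP nat

definition has_btype :: "bool list \<Rightarrow> lsym list \<Rightarrow> btype \<Rightarrow> bool" where
  "has_btype IS S b \<longleftrightarrow>
     (case b of
        BP i \<Rightarrow> (\<exists>R rest. S = R @ [P i] @ rest \<and> (\<forall>x \<in> set R. x \<noteq> P i \<and> x \<noteq> T i)
                   \<and> stuck_pos IS S = Some (length R))
      | BPP i \<Rightarrow> (\<exists>R1 R2 rest. S = R1 @ [P i] @ R2 @ [P i] @ rest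
                   \<and> (\<forall>x \<in> set R2. x \<noteq> P i \<and> x \<noteq> T i)
                   \<and> stuck_pos IS S = Some (length R1 + 1 + length R2)))"

end

theory Submission
  imports Defs
begin

(* Suppose the translation were correct. For i = j the process !check | ?0, for i ~= j the
   process !?check | ?!0 is must-convergent, so its translation must be as well. In both cases
   the component ending in check contains P_mu ... P_mu with no mu-action in between, and the
   other component can be brought into a state whose next action on mu is not T_mu: for i = j
   by running tau(?) alone until it blocks at its second P_j; for i ~= j because
   tau(!) tau(?) contains the pattern for both locks, so unless the other component's next
   actions on both locks are releases (which can simply be executed) one lock qualifies.
   From such a state the check component can be driven into a deadlock: either it reaches its
   second P_mu while holding mu, or it waits for a lock that the other component holds and
   never releases. *)

lemma must_conv_if_final:
  "succ x \<Longrightarrow> (\<And>y. \<not> step x y) \<Longrightarrow> must_conv step succ x"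
  unfolding must_conv_def may_conv_def by (metis converse_rtranclpE rtranclp.rtrancl_refl)

lemma must_conv_if_successors:
  assumes "step x y" "\<And>y. step x y \<Longrightarrow> must_conv step succ y"
  shows "must_conv step succ x"
  unfolding must_conv_def
proof (intro allI impI)
  fix z
  assume "step\<^sup>*\<^sup>* x z"
  then show "may_conv step succ z"
  proof (cases rule: converse_rtranclpE)
    case base
    from assms have "may_conv step succ y" unfolding must_conv_def by blast
    with \<open>step x y\<close> show ?thesis
      unfolding base may_conv_def by (meson converse_rtranclp_into_rtranclp)
  next
    case (step y')
    with assms(2) show ?thesis unfolding must_conv_def by blast
  qed
qed

lemma sync_step_pairE:
  assumes "sync_step {#x, y#} M"
  obtains u v where "{#x, y#} = {#SSend u, SRecv v#}" "M = {#u, v#}"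
  using assms
proof cases
  case (1 u v Q)
  then have "size {#x, y#} = size ({#SSend u, SRecv v#} + Q)" by simp
  then have "Q = {#}" by simp
  with 1 that show ?thesis by simp
qed

lemma sync_step_pair: "sync_step {#SSend u, SRecv v#} {#u, v#}"
  using sync_step.intros[of u v "{#}"] by simp

lemma must_conv_check_pair: "must_conv sync_step sync_successful {#SCheck, SZero#}"
  by (rule must_conv_if_final) (auto simp: sync_successful_def add_eq_conv_ex elim: sync_step_pairE)

lemma must_conv_send_check:
  "must_conv sync_step sync_successful {#SSend SCheck, SRecv SZero#}"
  by (rule must_conv_if_successors[where step = sync_step, OF sync_step_pair])
    (auto simp: add_eq_conv_ex must_conv_check_pair elim: sync_step_pairE)

lemma must_conv_send_recv_check:
  "must_conv sync_step sync_successful {#SSend (SRecv SCheck), SRecv (SSend SZero)#}"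
proof -
  have "must_conv sync_step sync_successful {#SSend SZero, SRecv SCheck#}"
    by (rule must_conv_if_successors[where step = sync_step, OF sync_step_pair])
      (auto simp: add_eq_conv_ex must_conv_check_pair add_mset_commute elim: sync_step_pairE)
  then show ?thesis
    by (intro must_conv_if_successors[where step = sync_step, OF sync_step_pair])
      (auto simp: add_eq_conv_ex add_mset_commute elim: sync_step_pairE)
qed

abbreviation next_sym :: "nat \<Rightarrow> lsym list \<Rightarrow> lsym option" where
  "next_sym l w \<equiv> find (\<lambda>s. sym_idx s = l) w"

lemma sym_idx_eq_cases: "sym_idx s = l \<Longrightarrow> s = P l \<or> s = T l"
  by (cases s) auto

lemma find_append_Some: "find Q u = Some x \<Longrightarrow> find Q (u @ v) = Some x"
  by (induction u) auto

definition has_PP :: "nat \<Rightarrow> lsym list \<Rightarrow> bool" where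
  "has_PP l w \<longleftrightarrow> (\<exists>u v. w = u @ P l # v \<and> next_sym l v = Some (P l))"

lemma has_PP_Cons_iff:
  "has_PP l (s # w) \<longleftrightarrow> has_PP l w \<or> (s = P l \<and> next_sym l w = Some (P l))"
  unfolding has_PP_def by (auto simp: Cons_eq_append_conv)

lemma has_PP_nonempty: "has_PP l w \<Longrightarrow> w \<noteq> []"
  unfolding has_PP_def by auto

lemma has_PP_append_left: "has_PP l v \<Longrightarrow> has_PP l (u @ v)"
  unfolding has_PP_def by (metis append.assoc)

lemma has_PP_append_right: "has_PP l u \<Longrightarrow> has_PP l (u @ v)"
  unfolding has_PP_def by (metis append.assoc append_Cons find_append_Some)

lemma has_PP_if_blocking_type:
  assumes "has_btype IS w (BPP l)"
  shows "has_PP l w"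
proof -
  from assms obtain R1 R2 rest where w: "w = R1 @ [P l] @ R2 @ [P l] @ rest"
    and R2: "\<forall>x\<in>set R2. x \<noteq> P l \<and> x \<noteq> T l"
    unfolding has_btype_def by auto
  from R2 have "\<forall>x\<in>set R2. sym_idx x \<noteq> l"
    using sym_idx_eq_cases by blast
  then have "next_sym l (R2 @ [P l] @ rest) = Some (P l)"
    by (induction R2) auto
  then show ?thesis unfolding has_PP_def w by auto
qed

fun enabled :: "bool list \<Rightarrow> lsym \<Rightarrow> bool" where
  "enabled C (P i) \<longleftrightarrow> \<not> C ! (i - 1)"
| "enabled C (T i) \<longleftrightarrow> True"

fun exec_sym :: "bool list \<Rightarrow> lsym \<Rightarrow> bool list" where
  "exec_sym C (P i) = C[i - 1 := True]"
| "exec_sym C (T i) = C[i - 1 := False]"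

lemma length_exec_sym [simp]: "length (exec_sym C s) = length C"
  by (cases s) auto

lemma exec_sym_nth_other:
  "1 \<le> sym_idx s \<Longrightarrow> 1 \<le> l \<Longrightarrow> sym_idx s \<noteq> l \<Longrightarrow> exec_sym C s ! (l - 1) = C ! (l - 1)"
  by (cases s) auto

lemma lock_step_exec_sym:
  assumes "1 \<le> sym_idx s" "sym_idx s \<le> length C" "enabled C s"
  shows "lock_step (add_mset (s # w, e) Q, C) (add_mset (w, e) Q, exec_sym C s)"
  using assms lock_step.lockP[of _ C w e Q] lock_step.lockT[of _ C w e Q] by (cases s) auto

lemma lock_stepE:
  assumes "lock_step (S, C) X"
  obtains s w e Q where "S = add_mset (s # w, e) Q" "X = (add_mset (w, e) Q, exec_sym C s)"
    "1 \<le> sym_idx s" "sym_idx s \<le> length C" "enabled C s"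
  using assms by cases fastforce+

type_synonym pair_state = "lsym list \<times> lsym list \<times> bool list"

inductive pair_step :: "pair_state \<Rightarrow> pair_state \<Rightarrow> bool" where
  first: "\<lbrakk>1 \<le> sym_idx s; sym_idx s \<le> length C; enabled C s\<rbrakk> \<Longrightarrow>
     pair_step (s # a, b, C) (a, b, exec_sym C s)"
| second: "\<lbrakk>1 \<le> sym_idx s; sym_idx s \<le> length C; enabled C s\<rbrakk> \<Longrightarrow>
     pair_step (a, s # b, C) (a, b, exec_sym C s)"

definition lock_state :: "pair_state \<Rightarrow> lstate" where
  "lock_state s = (case s of (a, b, C) \<Rightarrow> ({#(a, LCheck), (b, LZero)#}, C))"

lemma lock_step_lock_state_iff:
  "lock_step (lock_state s) X \<longleftrightarrow> (\<exists>s'. X = lock_state s' \<and> pair_step s s')"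
proof
  obtain a b C where s: "s = (a, b, C)" by (cases s)
  assume "lock_step (lock_state s) X"
  then have "lock_step ({#(a, LCheck), (b, LZero)#}, C) X" by (simp add: s lock_state_def)
  then obtain t w e Q where eq: "{#(a, LCheck), (b, LZero)#} = add_mset (t # w, e) Q"
    and X: "X = (add_mset (w, e) Q, exec_sym C t)"
    and t: "1 \<le> sym_idx t" "sym_idx t \<le> length C" "enabled C t"
    by (rule lock_stepE)
  from eq[symmetric] consider "t # w = a" "e = LCheck" "Q = {#(b, LZero)#}"
    | "t # w = b" "e = LZero" "Q = {#(a, LCheck)#}"
    by (auto simp: add_eq_conv_ex)
  then show "\<exists>s'. X = lock_state s' \<and> pair_step s s'"
  proof cases
    case 1
    then show ?thesis
      using X t pair_step.first[of t C w b] unfolding s lock_state_def by force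
  next
    case 2
    then show ?thesis
      using X t pair_step.second[of t C a w] unfolding s lock_state_def
      by (force simp: add_mset_commute)
  qed
next
  assume "\<exists>s'. X = lock_state s' \<and> pair_step s s'"
  then obtain s' where X: "X = lock_state s'" and "pair_step s s'" by blast
  from this(2) have "lock_step (lock_state s) (lock_state s')"
  proof cases
    case (first t C a b)
    then show ?thesis using lock_step_exec_sym[of t C a LCheck "{#(b, LZero)#}"]
      by (simp add: lock_state_def)
  next
    case (second t C a b)
    then show ?thesis using lock_step_exec_sym[of t C b LZero "{#(a, LCheck)#}"]
      by (simp add: lock_state_def add_mset_commute)
  qed
  with X show "lock_step (lock_state s) X" by simp
qed

lemma lock_steps_lock_state_iff:
  "lock_step\<^sup>*\<^sup>* (lock_state s) X \<longleftrightarrow> (\<exists>s'. X = lock_state s' \<and> pair_step\<^sup>*\<^sup>* s s')"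
proof
  assume "lock_step\<^sup>*\<^sup>* (lock_state s) X"
  then show "\<exists>s'. X = lock_state s' \<and> pair_step\<^sup>*\<^sup>* s s'"
  proof induction
    case (step Y Z)
    then show ?case by (metis lock_step_lock_state_iff rtranclp.rtrancl_into_rtrancl)
  qed blast
next
  assume "\<exists>s'. X = lock_state s' \<and> pair_step\<^sup>*\<^sup>* s s'"
  then obtain s' where X: "X = lock_state s'" and "pair_step\<^sup>*\<^sup>* s s'" by blast
  from this(2) have "lock_step\<^sup>*\<^sup>* (lock_state s) (lock_state s')"
  proof induction
    case (step s' s'')
    then show ?case by (metis lock_step_lock_state_iff rtranclp.rtrancl_into_rtrancl)
  qed simp
  with X show "lock_step\<^sup>*\<^sup>* (lock_state s) X" by simp
qed

lemma lock_successful_lock_state: "lock_successful (lock_state (a, b, C)) \<longleftrightarrow> a = []"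
  by (auto simp: lock_successful_def lock_state_def)

fun two_locks :: "pair_state \<Rightarrow> bool" where
  "two_locks (a, b, C) \<longleftrightarrow> length C = 2 \<and> wf_word 2 a \<and> wf_word 2 b"

lemma two_locks_step: "pair_step s s' \<Longrightarrow> two_locks s \<Longrightarrow> two_locks s'"
  by (induction rule: pair_step.induct) (auto simp: wf_word_def)

lemma two_locks_steps: "pair_step\<^sup>*\<^sup>* s s' \<Longrightarrow> two_locks s \<Longrightarrow> two_locks s'"
  by (induction rule: rtranclp_induct) (auto intro: two_locks_step)

lemma run_second_until_stuck:
  assumes "stuck_pos C b = Some n" "wf_word (length C) b"
  shows "\<exists>C'. pair_step\<^sup>*\<^sup>* (a, b, C) (a, drop n b, C')"
  using assms
proof (induction b arbitrary: C n)
  case Nil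
  then show ?case by simp
next
  case (Cons s b)
  then have s: "1 \<le> sym_idx s" "sym_idx s \<le> length C" and wf: "wf_word (length C) b"
    by (auto simp: wf_word_def)
  show ?case
  proof (cases "enabled C s")
    case False
    then have "n = 0" using Cons.prems(1) by (cases s) auto
    then show ?thesis by auto
  next
    case True
    then obtain m where m: "stuck_pos (exec_sym C s) b = Some m" "n = Suc m"
      using Cons.prems(1) by (cases s) auto
    have "pair_step (a, s # b, C) (a, b, exec_sym C s)"
      using s True by (rule pair_step.second)
    moreover obtain C' where "pair_step\<^sup>*\<^sup>* (a, b, exec_sym C s) (a, drop m b, C')"
      using Cons.IH[OF m(1)] wf by auto
    ultimately show ?thesis using m(2) by (auto intro: converse_rtranclp_into_rtranclp)
  qed
qed

lemma second_runs_to_blocking_P: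
  assumes "has_btype C b (BPP l)" "wf_word (length C) b"
  obtains rest C' where "pair_step\<^sup>*\<^sup>* (a, b, C) (a, P l # rest, C')"
proof -
  from assms(1) obtain R1 R2 rest where b: "b = R1 @ [P l] @ R2 @ [P l] @ rest"
    and "stuck_pos C b = Some (length R1 + 1 + length R2)"
    unfolding has_btype_def by auto
  from run_second_until_stuck[OF this(2) assms(2)] obtain C'
    where "pair_step\<^sup>*\<^sup>* (a, b, C) (a, drop (length R1 + 1 + length R2) b, C')" ..
  moreover have "drop (length R1 + 1 + length R2) b = P l # rest" by (simp add: b)
  ultimately show ?thesis using that by auto
qed

definition doomed :: "pair_state \<Rightarrow> bool" where
  "doomed s \<longleftrightarrow> (\<forall>a b C. pair_step\<^sup>*\<^sup>* s (a, b, C) \<longrightarrow> a \<noteq> [])"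

definition may_doom :: "pair_state \<Rightarrow> bool" where
  "may_doom s \<longleftrightarrow> (\<exists>s'. pair_step\<^sup>*\<^sup>* s s' \<and> doomed s')"

lemma may_doom_if_doomed: "doomed s \<Longrightarrow> may_doom s"
  unfolding may_doom_def by blast

lemma may_doom_step: "pair_step s s' \<Longrightarrow> may_doom s' \<Longrightarrow> may_doom s"
  unfolding may_doom_def by (meson converse_rtranclp_into_rtranclp)

lemma may_doom_steps: "pair_step\<^sup>*\<^sup>* s s' \<Longrightarrow> may_doom s' \<Longrightarrow> may_doom s"
  unfolding may_doom_def by (meson rtranclp_trans)

lemma not_must_conv_if_may_doom:
  assumes "may_doom s"
  shows "\<not> must_conv lock_step lock_successful (lock_state s)"
proof -
  from assms obtain s' where reach: "pair_step\<^sup>*\<^sup>* s s'" and "doomed s'"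
    unfolding may_doom_def by blast
  have "\<not> may_conv lock_step lock_successful (lock_state s')"
    using \<open>doomed s'\<close>
    unfolding may_conv_def lock_steps_lock_state_iff
    by (metis doomed_def lock_successful_lock_state prod_cases3)
  moreover have "lock_step\<^sup>*\<^sup>* (lock_state s) (lock_state s')"
    using reach lock_steps_lock_state_iff by blast
  ultimately show ?thesis unfolding must_conv_def by blast
qed

lemma not_correct_translation_if_may_doom:
  assumes "must_conv sync_step sync_successful M"
    and "tr_proc ws wr M = {#(a, LCheck), (b, LZero)#}" and "may_doom (a, b, IS)"
  shows "\<not> correct_translation IS ws wr"
proof
  assume "correct_translation IS ws wr"
  with assms(1) have "must_conv lock_step lock_successful (tr_proc ws wr M, IS)"
    unfolding correct_translation_def by blast
  with assms(2) not_must_conv_if_may_doom[OF assms(3)] show False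
    by (simp add: lock_state_def)
qed

lemma doomed_if_final:
  assumes "\<And>s'. \<not> pair_step s s'" and "fst s \<noteq> []"
  shows "doomed s"
  unfolding doomed_def
proof (intro allI impI)
  fix a b C
  assume "pair_step\<^sup>*\<^sup>* s (a, b, C)"
  then have "s = (a, b, C)" using assms(1) by (cases rule: converse_rtranclpE) auto
  then show "a \<noteq> []" using assms(2) by simp
qed

fun starved_on :: "nat \<Rightarrow> pair_state \<Rightarrow> bool" where
  "starved_on l (a, b, C) \<longleftrightarrow>
     C ! (l - 1) \<and> next_sym l a = Some (P l) \<and> next_sym l b \<noteq> Some (T l)"

lemma starved_on_step:
  assumes "1 \<le> l" "starved_on l s" "pair_step s s'"
  shows "starved_on l s'"
  using assms(3)
proof cases
  case (first t C a b)
  have "sym_idx t \<noteq> l"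
    using assms(2) first by (cases t) auto
  then show ?thesis using assms(1,2) first exec_sym_nth_other[of t l C] by simp
next
  case (second t C a b)
  have "sym_idx t \<noteq> l"
    using assms(2) second by (cases t) auto
  then show ?thesis using assms(1,2) second exec_sym_nth_other[of t l C] by simp
qed

lemma doomed_if_starved_on:
  assumes "1 \<le> l" "starved_on l s"
  shows "doomed s"
  unfolding doomed_def
proof (intro allI impI)
  fix a b C
  assume "pair_step\<^sup>*\<^sup>* s (a, b, C)"
  then have "starved_on l (a, b, C)"
    using assms(2) by induction (auto intro: starved_on_step[OF assms(1)])
  then show "a \<noteq> []" by auto
qed

lemma pair_step_size:
  "pair_step (a, b, C) (a', b', C') \<Longrightarrow> length a' + length b' < length a + length b"
  by (cases rule: pair_step.cases) auto

lemma may_doom_by_invariant: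
  assumes step: "\<And>s. I s \<Longrightarrow> may_doom s \<or> (\<exists>s'. pair_step s s' \<and> I s')"
    and "I s"
  shows "may_doom s"
  using \<open>I s\<close>
proof (induction s rule: measure_induct_rule[where f = "\<lambda>(a, b, C). length a + length b"])
  case (less s)
  from step[OF less.prems] show ?case
  proof
    assume "\<exists>s'. pair_step s s' \<and> I s'"
    then obtain s' where "pair_step s s'" "I s'" by blast
    moreover from this(1) have "may_doom s'"
      by (intro less.IH[OF _ \<open>I s'\<close>]) (auto dest: pair_step_size split: prod.splits)
    ultimately show ?case by (blast intro: may_doom_step)
  qed
qed

lemma two_lock_indices:
  assumes "{\<mu>, \<nu>} = {1, 2::nat}"
  shows "1 \<le> \<mu>" "\<mu> \<le> 2" "1 \<le> \<nu>" "\<nu> \<le> 2" "\<mu> \<noteq> \<nu>" "\<mu> - 1 \<noteq> \<nu> - 1"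
    and "\<And>k. 1 \<le> k \<Longrightarrow> k \<le> 2 \<Longrightarrow> k = \<mu> \<or> k = \<nu>"
proof -
  from assms have "(\<mu> = 1 \<and> \<nu> = 2) \<or> (\<mu> = 2 \<and> \<nu> = 1)"
    by (simp add: doubleton_eq_iff)
  then show "1 \<le> \<mu>" "\<mu> \<le> 2" "1 \<le> \<nu>" "\<nu> \<le> 2" "\<mu> \<noteq> \<nu>" "\<mu> - 1 \<noteq> \<nu> - 1"
    and "\<And>k. 1 \<le> k \<Longrightarrow> k \<le> 2 \<Longrightarrow> k = \<mu> \<or> k = \<nu>"
    by auto
qed

(* While the second word's next action on mu is T_mu, only the second word is run: the last
   conjunct keeps its head enabled, and once it holds nu for good the first word starves on nu. *)
fun deadlock_inv :: "nat \<Rightarrow> nat \<Rightarrow> pair_state \<Rightarrow> bool" where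
  "deadlock_inv \<mu> \<nu> (a, b, C) \<longleftrightarrow> two_locks (a, b, C) \<and> has_PP \<mu> a \<and>
     (next_sym \<mu> b = Some (T \<mu>) \<longrightarrow>
        next_sym \<nu> a = Some (P \<nu>) \<and> (C ! (\<nu> - 1) \<longrightarrow> next_sym \<nu> b = Some (T \<nu>)))"

lemma deadlock_inv_step_releasing:
  assumes \<mu>\<nu>: "{\<mu>, \<nu>} = {1, 2}" and inv: "deadlock_inv \<mu> \<nu> (a, b, C)"
    and release: "next_sym \<mu> b = Some (T \<mu>)"
  shows "may_doom (a, b, C) \<or> (\<exists>s'. pair_step (a, b, C) s' \<and> deadlock_inv \<mu> \<nu> s')"
proof -
  note idx = two_lock_indices[OF \<mu>\<nu>]
  have C: "length C = 2" and hPP: "has_PP \<mu> a" and a: "next_sym \<nu> a = Some (P \<nu>)"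
    and \<nu>_held: "C ! (\<nu> - 1) \<Longrightarrow> next_sym \<nu> b = Some (T \<nu>)"
    using inv release by auto
  from release obtain t b' where b: "b = t # b'" by (cases b) auto
  from inv b have t: "1 \<le> sym_idx t" "sym_idx t \<le> length C" by (auto simp: wf_word_def)
  with idx(7) C have "sym_idx t = \<mu> \<or> sym_idx t = \<nu>" by simp
  with release b have t_cases: "t = T \<mu> \<or> t = T \<nu> \<or> t = P \<nu>"
    by (cases t) (auto split: if_splits)
  with \<nu>_held b have "enabled C t" by auto
  with t have step: "pair_step (a, b, C) (a, b', exec_sym C t)"
    unfolding b by (intro pair_step.second)
  show ?thesis
  proof (cases "t = P \<nu> \<and> next_sym \<nu> b' \<noteq> Some (T \<nu>)")
    case True
    then have "starved_on \<nu> (a, b', exec_sym C t)"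
      using a idx C by auto
    then show ?thesis
      using step idx doomed_if_starved_on may_doom_if_doomed may_doom_step by blast
  next
    case False
    with t_cases have "deadlock_inv \<mu> \<nu> (a, b', exec_sym C t)"
      using two_locks_step[OF step] inv hPP a \<nu>_held release b idx C by auto
    with step show ?thesis by blast
  qed
qed

lemma deadlock_inv_step_holding:
  assumes \<mu>\<nu>: "{\<mu>, \<nu>} = {1, 2}" and inv: "deadlock_inv \<mu> \<nu> (a, b, C)"
    and hold: "next_sym \<mu> b \<noteq> Some (T \<mu>)"
  shows "may_doom (a, b, C) \<or> (\<exists>s'. pair_step (a, b, C) s' \<and> deadlock_inv \<mu> \<nu> s')"
proof -
  note idx = two_lock_indices[OF \<mu>\<nu>]
  have C: "length C = 2" and wf: "wf_word 2 a" "wf_word 2 b" and hPP: "has_PP \<mu> a"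
    using inv by auto
  from hPP obtain t a' where a: "a = t # a'" by (cases a) (auto dest: has_PP_nonempty)
  from wf(1) a C have t: "1 \<le> sym_idx t" "sym_idx t \<le> length C" by (auto simp: wf_word_def)
  show ?thesis
  proof (cases "enabled C t")
    case True
    with t have step: "pair_step (a, b, C) (a', b, exec_sym C t)"
      unfolding a by (intro pair_step.first)
    show ?thesis
    proof (cases "has_PP \<mu> a'")
      case True
      then have "deadlock_inv \<mu> \<nu> (a', b, exec_sym C t)"
        using two_locks_step[OF step] inv hold by simp
      with step show ?thesis by blast
    next
      case False
      with hPP a have "t = P \<mu>" "next_sym \<mu> a' = Some (P \<mu>)" by (auto simp: has_PP_Cons_iff)
      then have "starved_on \<mu> (a', b, exec_sym C t)"
        using hold idx C by simp
      then show ?thesis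
        using step idx doomed_if_starved_on may_doom_if_doomed may_doom_step by blast
    qed
  next
    case False
    then obtain k where t_k: "t = P k" and held: "C ! (k - 1)" by (cases t) auto
    show ?thesis
    proof (cases "starved_on k (a, b, C)")
      case True
      with t t_k show ?thesis using doomed_if_starved_on may_doom_if_doomed by auto
    next
      case False
      with held a t_k have release: "next_sym k b = Some (T k)" by auto
      with hold t t_k C idx(7) have k: "k = \<nu>" by auto
      show ?thesis
      proof (cases "\<exists>t' b'. b = t' # b' \<and> enabled C t'")
        case True
        then obtain t' b' where b: "b = t' # b'" and "enabled C t'" by blast
        from wf(2) b C have t': "1 \<le> sym_idx t'" "sym_idx t' \<le> length C" by (auto simp: wf_word_def)
        then have step: "pair_step (a, b, C) (a, b', exec_sym C t')"
          using \<open>enabled C t'\<close> unfolding b by (rule pair_step.second)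
        have "t' = P \<mu>" if "next_sym \<mu> b' = Some (T \<mu>)"
          using that hold b by (cases t') (auto split: if_splits)
        then have "deadlock_inv \<mu> \<nu> (a, b', exec_sym C t')"
          using two_locks_step[OF step] wf hPP a t_k k release b idx C by auto
        with step show ?thesis by blast
      next
        case False
        then have "\<not> pair_step (a, b, C) s'" for s'
          using \<open>\<not> enabled C t\<close> a by (auto elim: pair_step.cases)
        then show ?thesis
          using doomed_if_final a may_doom_if_doomed by fastforce
      qed
    qed
  qed
qed

lemma may_doom_if_has_PP:
  assumes "{\<mu>, \<nu>} = {1, 2}" "two_locks (a, b, C)" "has_PP \<mu> a" "next_sym \<mu> b \<noteq> Some (T \<mu>)"
  shows "may_doom (a, b, C)"
proof (rule may_doom_by_invariant[where I = "deadlock_inv \<mu> \<nu>"])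
  fix s
  assume "deadlock_inv \<mu> \<nu> s"
  then show "may_doom s \<or> (\<exists>s'. pair_step s s' \<and> deadlock_inv \<mu> \<nu> s')"
    using deadlock_inv_step_releasing deadlock_inv_step_holding assms(1)
    by (cases s) (metis (full_types))
next
  show "deadlock_inv \<mu> \<nu> (a, b, C)" using assms(2-4) by simp
qed

lemma may_doom_if_has_PP_both:
  assumes "two_locks s" "has_PP 1 (fst s)" "has_PP 2 (fst s)"
  shows "may_doom s"
proof (rule may_doom_by_invariant[where I = "\<lambda>s. two_locks s \<and> has_PP 1 (fst s) \<and> has_PP 2 (fst s)"])
  fix s :: pair_state
  obtain a b C where s: "s = (a, b, C)" by (cases s)
  assume "two_locks s \<and> has_PP 1 (fst s) \<and> has_PP 2 (fst s)"
  then have inv: "two_locks (a, b, C)" "has_PP 1 a" "has_PP 2 a" by (simp_all add: s)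
  consider "next_sym 1 b \<noteq> Some (T 1)" | "next_sym 2 b \<noteq> Some (T 2)"
    | "next_sym 1 b = Some (T 1)" "next_sym 2 b = Some (T 2)" by blast
  then show "may_doom s \<or>
    (\<exists>s'. pair_step s s' \<and> two_locks s' \<and> has_PP 1 (fst s') \<and> has_PP 2 (fst s'))"
  proof cases
    case 1
    then show ?thesis using may_doom_if_has_PP[of 1 2] inv s by auto
  next
    case 2
    then show ?thesis using may_doom_if_has_PP[of 2 1] inv s by auto
  next
    case 3
    then obtain t b' where b: "b = t # b'" by (cases b) auto
    from inv b have t: "1 \<le> sym_idx t" "sym_idx t \<le> length C" and "length C = 2"
      by (auto simp: wf_word_def)
    with 3 b have "t = T (sym_idx t)" by (cases t) (auto split: if_splits)
    with t have step: "pair_step (a, b, C) (a, b', exec_sym C t)"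
      unfolding b by (metis enabled.simps(2) pair_step.second)
    moreover have "two_locks (a, b', exec_sym C t)" using two_locks_step[OF step] inv(1) .
    ultimately show ?thesis using inv s by (intro disjI2 exI[of _ "(a, b', exec_sym C t)"]) simp
  qed
qed (use assms in simp)

theorem proposition5p9:
  fixes IS :: "bool list" and i j :: nat and ws wr :: "lsym list"
  assumes "length IS = 2"
    and "i \<in> {1, 2}" and "j \<in> {1, 2}"
    and "wf_word 2 ws" and "wf_word 2 wr"
    and "has_btype IS ws (BPP i)" and "has_btype IS wr (BPP j)"
  shows "\<not> correct_translation IS ws wr"
proof (cases "i = j")
  case True
  obtain rest C' where run: "pair_step\<^sup>*\<^sup>* (ws, wr, IS) (ws, P j # rest, C')"
    using second_runs_to_blocking_P[OF assms(7)] assms(1,5) by auto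
  have "{i, 3 - i} = {1, 2}" using assms(2) by auto
  moreover have "two_locks (ws, P j # rest, C')"
    using two_locks_steps[OF run] assms(1,4,5) by simp
  ultimately have "may_doom (ws, P j # rest, C')"
    using may_doom_if_has_PP has_PP_if_blocking_type[OF assms(6)] True by simp
  with run have "may_doom (ws, wr, IS)" by (rule may_doom_steps)
  then show ?thesis
    using not_correct_translation_if_may_doom[OF must_conv_send_check] by (simp add: tr_proc_def)
next
  case False
  have "has_PP i (ws @ wr)" "has_PP j (ws @ wr)"
    using has_PP_if_blocking_type assms(6,7) has_PP_append_left has_PP_append_right by blast+
  with False assms(2,3) have "has_PP 1 (ws @ wr)" "has_PP 2 (ws @ wr)" by auto
  then have "may_doom (ws @ wr, wr @ ws, IS)"
    using assms(1,4,5) by (intro may_doom_if_has_PP_both) (auto simp: wf_word_def)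
  then show ?thesis
    using not_correct_translation_if_may_doom[OF must_conv_send_recv_check] by (simp add: tr_proc_def)
qed

end
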